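(* Let $u \in W$ be rational with $u \neq w_0$. Then there exists a simple root $\alpha$ such that $u^{-1}(\alpha) > 0$ and $u(\alpha) < 0$.
   Context: $W$ is the Weyl group of a root system $\Pi$ with simple roots $\Delta$, positive roots $\Pi_+$, longest element $w_0$. $\gamma>0$ (resp. $<0$) means $\gamma$ is a positive (resp. negative) root. $\alpha\le\beta$ iff $\beta-\alpha$ is a nonnegative integer combination of simple roots. For $A\subseteq\Pi_+$, $\mathrm{Adj}(A) = \{\alpha\in\Pi_+ : \exists\beta\in A,\ \alpha\le\beta\}$. For $u\in W$: $\nu^0(u) = u(\Pi_+)\cap\Pi_+$, $\nu^k(u) = u(\mathrm{Adj}\,\nu^{k-1}(u))\cap\Pi_+$, eventually constant with value $\nu(u)$; $u$ is rational iff $\nu(u) = \emptyset$. *)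

theory Defs
  imports "HOL-Analysis.Analysis"
begin

definition refl :: "'a::real_inner \<Rightarrow> 'a \<Rightarrow> 'a" where
  "refl a x = x - (2 * (x \<bullet> a) / (a \<bullet> a)) *\<^sub>R a"

definition root_system :: "'a::euclidean_space set \<Rightarrow> bool" where
  "root_system R \<longleftrightarrow> finite R \<and> 0 \<notin> R
     \<and> (\<forall>a\<in>R. refl a ` R \<subseteq> R)
     \<and> (\<forall>a\<in>R. \<forall>b\<in>R. 2 * (b \<bullet> a) / (a \<bullet> a) \<in> \<int>)
     \<and> (\<forall>a\<in>R. \<forall>c::real. c *\<^sub>R a \<in> R \<longrightarrow> c = 1 \<or> c = -1)"

definition nonneg_int_comb :: "'a::real_vector set \<Rightarrow> 'a \<Rightarrow> bool" where
  "nonneg_int_comb D x \<longleftrightarrow> (\<exists>c. (\<forall>d\<in>D. c d \<in> \<nat>) \<and> x = (\<Sum>d\<in>D. c d *\<^sub>R d))"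

definition is_base :: "'a::euclidean_space set \<Rightarrow> 'a set \<Rightarrow> bool" where
  "is_base R D \<longleftrightarrow> D \<subseteq> R \<and> independent D
     \<and> (\<forall>b\<in>R. nonneg_int_comb D b \<or> nonneg_int_comb D (- b))"

definition pos_roots :: "'a::euclidean_space set \<Rightarrow> 'a set \<Rightarrow> 'a set" where
  "pos_roots R D = {b\<in>R. nonneg_int_comb D b}"

definition root_le :: "'a::euclidean_space set \<Rightarrow> 'a \<Rightarrow> 'a \<Rightarrow> bool" where
  "root_le D a b \<longleftrightarrow> nonneg_int_comb D (b - a)"

definition Adj :: "'a::euclidean_space set \<Rightarrow> 'a set \<Rightarrow> 'a set \<Rightarrow> 'a set" where
  "Adj R D A = {a\<in>pos_roots R D. \<exists>b\<in>A. root_le D a b}"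

inductive_set weyl_group :: "'a::euclidean_space set \<Rightarrow> ('a \<Rightarrow> 'a) set" for R where
  id: "id \<in> weyl_group R"
| step: "w \<in> weyl_group R \<Longrightarrow> a \<in> R \<Longrightarrow> refl a \<circ> w \<in> weyl_group R"

definition refl_prod :: "'a::real_inner list \<Rightarrow> 'a \<Rightarrow> 'a" where
  "refl_prod l = foldr (\<lambda>a f. refl a \<circ> f) l id"

definition weyl_length :: "'a::euclidean_space set \<Rightarrow> ('a \<Rightarrow> 'a) \<Rightarrow> nat" where
  "weyl_length D w = (LEAST n. \<exists>l. length l = n \<and> set l \<subseteq> D \<and> refl_prod l = w)"

definition longest_element :: "'a::euclidean_space set \<Rightarrow> 'a set \<Rightarrow> ('a \<Rightarrow> 'a) \<Rightarrow> bool" where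
  "longest_element R D w0 \<longleftrightarrow> w0 \<in> weyl_group R
     \<and> (\<forall>w\<in>weyl_group R. weyl_length D w \<le> weyl_length D w0)"

primrec nu :: "'a::euclidean_space set \<Rightarrow> 'a set \<Rightarrow> ('a \<Rightarrow> 'a) \<Rightarrow> nat \<Rightarrow> 'a set" where
  "nu R D u 0 = u ` pos_roots R D \<inter> pos_roots R D"
| "nu R D u (Suc k) = u ` Adj R D (nu R D u k) \<inter> pos_roots R D"

text \<open>u is rational iff the eventual value of nu^k(u) is empty
  (once some nu^k(u) is empty, all later ones are, since Adj {} = {}).\<close>
definition rational :: "'a::euclidean_space set \<Rightarrow> 'a set \<Rightarrow> ('a \<Rightarrow> 'a) \<Rightarrow> bool" where
  "rational R D u \<longleftrightarrow> (\<exists>k. nu R D u k = {})"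

end

theory Submission
  imports Defs
begin

text \<open>
  The longest element w0 is the unique element of W sending every positive root to a negative
  one, because the length of an element equals its number of inversions. So if u \<noteq> w0, some
  simple root b has u b > 0. Suppose no simple root a has inv u a > 0 and u a < 0, and write
  u b = \<Sum> c(d) d. Some d with c(d) \<noteq> 0 has u d > 0: otherwise every such d has
  inv u d < 0, and then b = \<Sum> c(d) inv u d would be negative. Since d \<le> u b, the root u d
  lies in nu(k+1) whenever u b lies in nu(k). Hence no nu(k) is empty, and u is not rational.
\<close>

section \<open>Reflections and the Weyl group\<close>

lemma linear_refl: "linear (refl a)"
  by (rule linearI) (auto simp: refl_def algebra_simps add_divide_distrib)

lemma refl_inner_refl: "a \<noteq> 0 \<Longrightarrow> refl a x \<bullet> refl a y = x \<bullet> y"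
  by (simp add: refl_def inner_diff_left inner_diff_right field_simps)
    (simp add: inner_commute algebra_simps)

lemma refl_refl [simp]: "a \<noteq> 0 \<Longrightarrow> refl a (refl a x) = x"
  by (simp add: refl_def inner_diff_left field_simps)

lemma refl_self: "a \<noteq> 0 \<Longrightarrow> refl a a = - a"
  by (simp add: refl_def algebra_simps scaleR_2)

lemma refl_uminus: "refl (- a) = refl a"
  by (rule ext) (simp add: refl_def)

lemma refl_orthogonal_comp:
  assumes "linear v" and "\<And>x y. v x \<bullet> v y = x \<bullet> y"
  shows "refl (v a) \<circ> v = v \<circ> refl a"
  using assms by (auto simp: refl_def linear_diff linear_scale)

lemma refl_prod_Nil [simp]: "refl_prod [] = id"
  by (simp add: refl_prod_def)

lemma refl_prod_Cons [simp]: "refl_prod (a # l) = refl a \<circ> refl_prod l"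
  by (simp add: refl_prod_def)

lemma refl_prod_append: "refl_prod (l @ m) = refl_prod l \<circ> refl_prod m"
  by (induction l) auto

lemma linear_refl_prod: "linear (refl_prod l)"
proof (induction l)
  case Nil
  show ?case unfolding refl_prod_Nil by (rule linear_id)
next
  case (Cons a l)
  then show ?case unfolding refl_prod_Cons by (rule linear_compose[OF _ linear_refl])
qed

lemma refl_prod_inner: "0 \<notin> set l \<Longrightarrow> refl_prod l x \<bullet> refl_prod l y = x \<bullet> y"
  by (induction l arbitrary: x y) (auto simp: refl_inner_refl)

lemma refl_prod_rev_cancel [simp]: "0 \<notin> set l \<Longrightarrow> refl_prod l (refl_prod (rev l) x) = x"
  by (induction l arbitrary: x) (auto simp: refl_prod_append)

lemma refl_prod_cancel_rev [simp]: "0 \<notin> set l \<Longrightarrow> refl_prod (rev l) (refl_prod l x) = x"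
  using refl_prod_rev_cancel[of "rev l"] by simp

lemma inv_refl_prod: "0 \<notin> set l \<Longrightarrow> inv (refl_prod l) = refl_prod (rev l)"
  by (rule inv_equality) simp_all

lemma refl_refl_prod:
  assumes "0 \<notin> set l"
  shows "refl (refl_prod l a) = refl_prod (l @ a # rev l)"
proof -
  have "refl (refl_prod l a) = refl (refl_prod l a) \<circ> refl_prod l \<circ> refl_prod (rev l)"
    using assms by (auto simp: fun_eq_iff)
  also have "\<dots> = refl_prod l \<circ> refl a \<circ> refl_prod (rev l)"
    using refl_orthogonal_comp[OF linear_refl_prod refl_prod_inner[OF assms]] by simp
  finally show ?thesis
    by (simp add: refl_prod_append comp_assoc)
qed

lemma weyl_group_iff_word: "w \<in> weyl_group R \<longleftrightarrow> (\<exists>l. set l \<subseteq> R \<and> w = refl_prod l)"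
proof
  show "w \<in> weyl_group R \<Longrightarrow> \<exists>l. set l \<subseteq> R \<and> w = refl_prod l"
  proof (induction rule: weyl_group.induct)
    case (step w a)
    then obtain l where "set l \<subseteq> R" "w = refl_prod l" by blast
    with step.hyps(2) show ?case by (intro exI[of _ "a # l"]) simp
  qed (auto intro: exI[of _ "[]"])
next
  have "set l \<subseteq> R \<Longrightarrow> refl_prod l \<in> weyl_group R" for l
    by (induction l) (auto intro: weyl_group.intros)
  then show "\<exists>l. set l \<subseteq> R \<and> w = refl_prod l \<Longrightarrow> w \<in> weyl_group R" by blast
qed

lemma weyl_group_comp: "u \<in> weyl_group R \<Longrightarrow> v \<in> weyl_group R \<Longrightarrow> u \<circ> v \<in> weyl_group R"
  unfolding weyl_group_iff_word by (metis le_sup_iff refl_prod_append set_append)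

lemma refl_in_weyl_group: "a \<in> R \<Longrightarrow> refl a \<in> weyl_group R"
  using weyl_group.step[OF weyl_group.id] by simp

lemma weyl_group_linear: "w \<in> weyl_group R \<Longrightarrow> linear w"
  by (auto simp: weyl_group_iff_word linear_refl_prod)

lemma weyl_group_bij:
  assumes "0 \<notin> R" and "w \<in> weyl_group R"
  shows "bij w"
proof -
  obtain l where l: "set l \<subseteq> R" "w = refl_prod l"
    using assms(2) by (auto simp: weyl_group_iff_word)
  then have "0 \<notin> set l" using assms(1) by blast
  then show ?thesis
    unfolding l(2) by (intro o_bij[of "refl_prod (rev l)"]) (auto simp: fun_eq_iff)
qed

lemma weyl_group_inv:
  assumes "0 \<notin> R" and "w \<in> weyl_group R"
  shows "inv w \<in> weyl_group R"
proof -
  obtain l where l: "set l \<subseteq> R" "w = refl_prod l"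
    using assms(2) by (auto simp: weyl_group_iff_word)
  then have "inv w = refl_prod (rev l)" using assms(1) inv_refl_prod by blast
  with l(1) show ?thesis unfolding weyl_group_iff_word by (intro exI[of _ "rev l"]) auto
qed

lemma weyl_length_le: "set l \<subseteq> D \<Longrightarrow> refl_prod l = w \<Longrightarrow> weyl_length D w \<le> length l"
  unfolding weyl_length_def by (rule Least_le) blast

section \<open>Nonnegative integer combinations\<close>

lemma Nats_nonneg: "(x::real) \<in> \<nat> \<Longrightarrow> 0 \<le> x"
  by (auto simp: Nats_altdef2)

lemma nonneg_int_comb_0: "nonneg_int_comb D 0"
  unfolding nonneg_int_comb_def by (intro exI[of _ "\<lambda>_. 0"]) simp

lemma nonneg_int_comb_add:
  assumes "nonneg_int_comb D x" and "nonneg_int_comb D y"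
  shows "nonneg_int_comb D (x + y)"
proof -
  obtain c e where "\<forall>d\<in>D. c d \<in> \<nat>" "x = (\<Sum>d\<in>D. c d *\<^sub>R d)"
    and "\<forall>d\<in>D. e d \<in> \<nat>" "y = (\<Sum>d\<in>D. e d *\<^sub>R d)"
    using assms unfolding nonneg_int_comb_def by blast
  then show ?thesis unfolding nonneg_int_comb_def
    by (intro exI[of _ "\<lambda>d. c d + e d"]) (auto simp: scaleR_add_left sum.distrib)
qed

lemma nonneg_int_comb_scaleR:
  assumes "k \<in> \<nat>" and "nonneg_int_comb D x"
  shows "nonneg_int_comb D (k *\<^sub>R x)"
proof -
  obtain c where "\<forall>d\<in>D. c d \<in> \<nat>" "x = (\<Sum>d\<in>D. c d *\<^sub>R d)"
    using assms(2) unfolding nonneg_int_comb_def by blast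
  with assms(1) show ?thesis unfolding nonneg_int_comb_def
    by (intro exI[of _ "\<lambda>d. k * c d"]) (auto simp: scaleR_sum_right)
qed

lemma nonneg_int_comb_sum:
  "finite S \<Longrightarrow> (\<And>i. i \<in> S \<Longrightarrow> nonneg_int_comb D (f i)) \<Longrightarrow> nonneg_int_comb D (\<Sum>i\<in>S. f i)"
  by (induction S rule: finite_induct) (auto simp: nonneg_int_comb_0 nonneg_int_comb_add)

lemma nonneg_int_comb_member:
  assumes "finite D" and "a \<in> D"
  shows "nonneg_int_comb D a"
proof -
  have "(\<Sum>d\<in>D. (if d = a then 1 else 0) *\<^sub>R d) = a"
    using assms by (simp add: if_distrib[of "\<lambda>t. t *\<^sub>R _"] cong: if_cong)
  then show ?thesis unfolding nonneg_int_comb_def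
    by (intro exI[of _ "\<lambda>d. if d = a then 1 else 0"]) auto
qed

lemma independent_coeff_eq:
  fixes D :: "'a::euclidean_space set"
  assumes "independent D" and "(\<Sum>d\<in>D. f d *\<^sub>R d) = (\<Sum>d\<in>D. g d *\<^sub>R d)" and "d \<in> D"
  shows "f d = g d"
proof -
  have "(\<Sum>d\<in>D. (f d - g d) *\<^sub>R d) = 0"
    using assms(2) by (simp add: scaleR_diff_left sum_subtractf)
  with assms(1,3) show ?thesis unfolding independent_explicit by auto
qed

lemma nonneg_int_comb_antisym:
  fixes D :: "'a::euclidean_space set"
  assumes "independent D" and "nonneg_int_comb D x" and "nonneg_int_comb D (- x)"
  shows "x = 0"
proof -
  obtain c e where c: "\<forall>d\<in>D. c d \<in> \<nat>" "x = (\<Sum>d\<in>D. c d *\<^sub>R d)"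
    and e: "\<forall>d\<in>D. e d \<in> \<nat>" "- x = (\<Sum>d\<in>D. e d *\<^sub>R d)"
    using assms(2,3) unfolding nonneg_int_comb_def by blast
  have "(\<Sum>d\<in>D. (c d + e d) *\<^sub>R d) = (\<Sum>d\<in>D. 0 *\<^sub>R d)"
    using c(2) e(2) by (simp add: scaleR_add_left sum.distrib flip: e(2))
  then have "c d + e d = 0" if "d \<in> D" for d
    using independent_coeff_eq[OF assms(1), of "\<lambda>d. c d + e d" "\<lambda>_. 0"] that by simp
  then have "c d = 0" if "d \<in> D" for d
    using that c(1) e(1) Nats_nonneg by (metis add_nonneg_eq_0_iff)
  then show ?thesis using c(2) by simp
qed

lemma nonneg_int_comb_summand_of_multiple:
  fixes D :: "'a::euclidean_space set"
  assumes "independent D" and "a \<in> D"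
    and "nonneg_int_comb D x" and "nonneg_int_comb D y" and "x + y = k *\<^sub>R a"
  shows "\<exists>c\<in>\<nat>. x = c *\<^sub>R a"
proof -
  obtain c e where c: "\<forall>d\<in>D. c d \<in> \<nat>" "x = (\<Sum>d\<in>D. c d *\<^sub>R d)"
    and e: "\<forall>d\<in>D. e d \<in> \<nat>" "y = (\<Sum>d\<in>D. e d *\<^sub>R d)"
    using assms(3,4) unfolding nonneg_int_comb_def by blast
  have fin: "finite D" using assms(1) by (simp add: independent_explicit)
  have coeffs: "(\<Sum>d\<in>D. (c d + e d) *\<^sub>R d) = (\<Sum>d\<in>D. (if d = a then k else 0) *\<^sub>R d)"
    using assms(2,5) fin c(2) e(2)
    by (simp add: scaleR_add_left sum.distrib if_distrib[of "\<lambda>t. t *\<^sub>R _"] cong: if_cong)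
  have "c d + e d = 0" if "d \<in> D - {a}" for d
    using independent_coeff_eq[OF assms(1) coeffs, of d] that by simp
  then have "c d = 0" if "d \<in> D - {a}" for d
    using that c(1) e(1) Nats_nonneg by (metis DiffD1 add_nonneg_eq_0_iff)
  then have "x = c a *\<^sub>R a"
    using c(2) sum.remove[OF fin assms(2), of "\<lambda>d. c d *\<^sub>R d"] by simp
  with c(1) assms(2) show ?thesis by blast
qed

lemma nonneg_int_comb_inner_pos:
  fixes b :: "'a::real_inner"
  assumes "nonneg_int_comb D b" and "b \<noteq> 0"
  shows "\<exists>d\<in>D. 0 < b \<bullet> d"
proof (rule ccontr)
  assume no_pos: "\<not> ?thesis"
  obtain c where c: "\<forall>d\<in>D. c d \<in> \<nat>" "b = (\<Sum>d\<in>D. c d *\<^sub>R d)"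
    using assms(1) unfolding nonneg_int_comb_def by blast
  have "b \<bullet> b = (\<Sum>d\<in>D. c d * (b \<bullet> d))"
    by (subst (2) c(2)) (simp add: inner_sum_right)
  also have "\<dots> \<le> 0"
    using no_pos c(1) Nats_nonneg by (intro sum_nonpos) (simp add: mult_nonneg_nonpos not_less)
  finally show False using assms(2) inner_gt_zero_iff[of b] by linarith
qed

lemma linear_nonneg_int_comb_Nats:
  assumes "linear f" and "\<forall>d\<in>D. f d = (1::real)" and "nonneg_int_comb D b"
  shows "f b \<in> \<nat>"
proof -
  obtain c where c: "\<forall>d\<in>D. c d \<in> \<nat>" "b = (\<Sum>d\<in>D. c d *\<^sub>R d)"
    using assms(3) unfolding nonneg_int_comb_def by blast
  have "f b = (\<Sum>d\<in>D. c d)"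
    using assms(1,2) by (simp add: c(2) linear_sum linear_scale)
  also have "\<dots> \<in> \<nat>"
    using c(1) by (induction D rule: infinite_finite_induct) auto
  finally show ?thesis .
qed

lemma root_le_of_coeff:
  assumes "finite D" and "a \<in> D" and "\<forall>d\<in>D. c d \<in> \<nat>" and "c a \<noteq> 0"
  shows "root_le D a (\<Sum>d\<in>D. c d *\<^sub>R d)"
proof -
  define c' where "c' = c(a := c a - 1)"
  have "1 \<le> c a"
    using assms(2-4) by (auto simp: Nats_altdef2 elim!: Ints_cases)
  then have "\<forall>d\<in>D. c' d \<in> \<nat>"
    using assms(2,3) by (auto simp: c'_def)
  moreover have "(\<Sum>d\<in>D. c' d *\<^sub>R d) = (\<Sum>d\<in>D. c d *\<^sub>R d) - a"
    using assms(1,2) by (simp add: c'_def sum.remove scaleR_diff_left)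
  ultimately show ?thesis
    unfolding root_le_def nonneg_int_comb_def by metis
qed

section \<open>Positive and negative roots\<close>

locale based_root_system =
  fixes R D :: "'a::euclidean_space set"
  assumes root_system: "root_system R" and base: "is_base R D"
begin

abbreviation Pos :: "'a set" where "Pos \<equiv> pos_roots R D"
abbreviation Neg :: "'a set" where "Neg \<equiv> uminus ` pos_roots R D"

lemma finite_roots: "finite R"
  using root_system by (simp add: root_system_def)

lemma zero_notin_roots: "0 \<notin> R"
  using root_system by (simp add: root_system_def)

lemma root_nonzero: "a \<in> R \<Longrightarrow> a \<noteq> 0"
  using zero_notin_roots by blast

lemma refl_in_roots: "a \<in> R \<Longrightarrow> b \<in> R \<Longrightarrow> refl a b \<in> R"
  using root_system by (auto simp: root_system_def)

lemma cartan_integer: "a \<in> R \<Longrightarrow> b \<in> R \<Longrightarrow> 2 * (b \<bullet> a) / (a \<bullet> a) \<in> \<int>"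
  using root_system by (simp add: root_system_def)

lemma reduced: "a \<in> R \<Longrightarrow> c *\<^sub>R a \<in> R \<Longrightarrow> c = 1 \<or> c = -1"
  using root_system by (simp add: root_system_def)

lemma uminus_in_roots: "a \<in> R \<Longrightarrow> - a \<in> R"
  using refl_in_roots[of a a] refl_self[OF root_nonzero] by simp

lemma simple_in_roots: "D \<subseteq> R"
  using base by (simp add: is_base_def)

lemma independent_simple: "independent D"
  using base by (simp add: is_base_def)

lemma finite_simple: "finite D"
  using independent_simple by (simp add: independent_bound)

lemma simple_nonzero: "a \<in> D \<Longrightarrow> a \<noteq> 0"
  using simple_in_roots root_nonzero by blast

lemma simple_pos: "a \<in> D \<Longrightarrow> a \<in> Pos"
  using simple_in_roots finite_simple nonneg_int_comb_member by (auto simp: pos_roots_def)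

lemma pos_in_roots: "b \<in> Pos \<Longrightarrow> b \<in> R"
  by (simp add: pos_roots_def)

lemma neg_iff: "b \<in> Neg \<longleftrightarrow> b \<in> R \<and> nonneg_int_comb D (- b)"
  using uminus_in_roots by (force simp: pos_roots_def)

lemma pos_notin_neg: "b \<in> Pos \<Longrightarrow> b \<notin> Neg"
  using nonneg_int_comb_antisym[OF independent_simple] zero_notin_roots
  by (auto simp: pos_roots_def neg_iff)

lemma pos_or_neg: "b \<in> R \<Longrightarrow> b \<in> Pos \<or> b \<in> Neg"
  using base unfolding neg_iff by (auto simp: is_base_def pos_roots_def)

lemma finite_pos: "finite Pos"
  using finite_roots by (simp add: pos_roots_def)

lemma refl_simple_pos:
  assumes "a \<in> D" and "b \<in> Pos" and "b \<noteq> a"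
  shows "refl a b \<in> Pos"
proof (rule ccontr)
  assume "refl a b \<notin> Pos"
  moreover have "refl a b \<in> R"
    using assms(1,2) simple_in_roots pos_in_roots refl_in_roots by blast
  ultimately have "nonneg_int_comb D (- refl a b)"
    using pos_or_neg neg_iff by blast
  moreover have "b + - refl a b = (2 * (b \<bullet> a) / (a \<bullet> a)) *\<^sub>R a"
    by (simp add: refl_def)
  ultimately obtain c where "c \<in> \<nat>" "b = c *\<^sub>R a"
    using nonneg_int_comb_summand_of_multiple[OF independent_simple assms(1)] assms(2)
    by (metis mem_Collect_eq pos_roots_def)
  moreover have "c = 1 \<or> c = -1"
    using reduced assms(1,2) simple_in_roots pos_in_roots \<open>b = c *\<^sub>R a\<close> by blast
  ultimately show False
    using assms(3) Nats_nonneg by force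
qed

lemma weyl_group_maps_roots: "w \<in> weyl_group R \<Longrightarrow> b \<in> R \<Longrightarrow> w b \<in> R"
proof (induction arbitrary: b rule: weyl_group.induct)
  case (step w a)
  then show ?case by (simp add: refl_in_roots)
qed simp

lemma refl_simple_height_decrease:
  assumes "linear f" and "\<forall>d\<in>D. f d = (1::real)" and "b \<in> Pos" and "b \<notin> D"
  shows "\<exists>d\<in>D. refl d b \<in> Pos \<and> f (refl d b) \<le> f b - 1"
proof -
  obtain d where d: "d \<in> D" "0 < b \<bullet> d"
    using nonneg_int_comb_inner_pos assms(3) pos_in_roots root_nonzero
    by (metis mem_Collect_eq pos_roots_def)
  define k where "k = 2 * (b \<bullet> d) / (d \<bullet> d)"
  have "k \<in> \<int>"
    unfolding k_def using cartan_integer d(1) simple_in_roots pos_in_roots assms(3) by blast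
  moreover have "0 < k"
    unfolding k_def using d simple_nonzero by simp
  ultimately have "1 \<le> k"
    by (auto elim!: Ints_cases)
  moreover have "f (refl d b) = f b - k"
    using assms(1,2) d(1) by (simp add: refl_def k_def linear_diff linear_scale)
  moreover have "refl d b \<in> Pos"
    using refl_simple_pos d(1) assms(3,4) by blast
  ultimately show ?thesis using d(1) by force
qed

lemma pos_root_simple_conj:
  assumes "b \<in> Pos"
  shows "\<exists>l a. set l \<subseteq> D \<and> a \<in> D \<and> b = refl_prod l a"
proof -
  obtain f where f: "linear f" "\<forall>d\<in>D. f d = (1::real)"
    using linear_independent_extend[OF independent_simple, of "\<lambda>_. 1"] by auto
  have height: "f b \<in> \<nat>" if "b \<in> Pos" for b
    using linear_nonneg_int_comb_Nats[OF f] that by (simp add: pos_roots_def)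
  have "\<forall>b\<in>Pos. f b = of_nat n \<longrightarrow> (\<exists>l a. set l \<subseteq> D \<and> a \<in> D \<and> b = refl_prod l a)" for n
  proof (induction n rule: less_induct)
    case (less n)
    show ?case
    proof (intro ballI impI)
      fix b assume b: "b \<in> Pos" "f b = of_nat n"
      show "\<exists>l a. set l \<subseteq> D \<and> a \<in> D \<and> b = refl_prod l a"
      proof (cases "b \<in> D")
        case True
        then show ?thesis by (intro exI[of _ "[]"] exI[of _ b]) simp
      next
        case False
        then obtain d where d: "d \<in> D" "refl d b \<in> Pos" "f (refl d b) \<le> f b - 1"
          using refl_simple_height_decrease[OF f b(1)] by blast
        obtain m where m: "f (refl d b) = of_nat m"
          using height[OF d(2)] by (auto elim: Nats_cases)
        then have "m < n" using b(2) d(3) by simp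
        then obtain l a where "set l \<subseteq> D" "a \<in> D" "refl d b = refl_prod l a"
          using less d(2) m by blast
        moreover have "b = refl d (refl d b)"
          using d(1) simple_nonzero by simp
        ultimately show ?thesis
          using d(1) by (intro exI[of _ "d # l"] exI[of _ a]) simp
      qed
    qed
  qed
  then show ?thesis
    using assms height[OF assms] by (auto elim: Nats_cases)
qed

lemma refl_root_simple_word:
  assumes "b \<in> R"
  shows "\<exists>l. set l \<subseteq> D \<and> refl b = refl_prod l"
proof -
  obtain p where p: "p \<in> Pos" "refl b = refl p"
    using pos_or_neg[OF assms] refl_uminus by force
  then obtain l a where la: "set l \<subseteq> D" "a \<in> D" "p = refl_prod l a"
    using pos_root_simple_conj by blast
  then have "0 \<notin> set l" using simple_nonzero by blast
  then have "refl b = refl_prod (l @ a # rev l)"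
    using p(2) la(3) refl_refl_prod by simp
  with la(1,2) show ?thesis by (intro exI[of _ "l @ a # rev l"]) auto
qed

lemma weyl_group_iff_simple_word:
  "w \<in> weyl_group R \<longleftrightarrow> (\<exists>l. set l \<subseteq> D \<and> w = refl_prod l)"
proof
  show "w \<in> weyl_group R \<Longrightarrow> \<exists>l. set l \<subseteq> D \<and> w = refl_prod l"
  proof (induction rule: weyl_group.induct)
    case (step w a)
    obtain l where "set l \<subseteq> D" "w = refl_prod l"
      using step.IH by blast
    moreover obtain m where "set m \<subseteq> D" "refl a = refl_prod m"
      using refl_root_simple_word[OF step.hyps(2)] by blast
    ultimately show ?case by (intro exI[of _ "m @ l"]) (simp add: refl_prod_append)
  qed (auto intro: exI[of _ "[]"])
qed (use simple_in_roots weyl_group_iff_word in blast)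

lemma simple_word_in_weyl_group: "set l \<subseteq> D \<Longrightarrow> refl_prod l \<in> weyl_group R"
  unfolding weyl_group_iff_simple_word by blast

section \<open>Inversions and length\<close>

definition inversions :: "('a \<Rightarrow> 'a) \<Rightarrow> 'a set" where
  "inversions w = {b \<in> Pos. w b \<in> Neg}"

lemma finite_inversions: "finite (inversions w)"
  using finite_pos by (simp add: inversions_def)

lemma inversions_id: "inversions id = {}"
  using pos_notin_neg by (auto simp: inversions_def)

lemma card_inversions_refl_comp:
  assumes "a \<in> D" and "w \<in> weyl_group R"
  shows "card (inversions (refl a \<circ> w)) \<le> card (inversions w) + 1"
proof -
  have "inversions (refl a \<circ> w) \<subseteq> insert (inv w a) (inversions w)"
  proof
    fix b assume b: "b \<in> inversions (refl a \<circ> w)"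
    then have "b \<in> Pos" "refl a (w b) \<in> Neg" by (auto simp: inversions_def)
    moreover have "w b \<in> R"
      using weyl_group_maps_roots[OF assms(2)] pos_in_roots \<open>b \<in> Pos\<close> by blast
    ultimately have "w b \<in> Neg \<or> w b = a"
      using pos_or_neg refl_simple_pos[OF assms(1)] pos_notin_neg by blast
    moreover have "w b = a \<Longrightarrow> b = inv w a"
      using weyl_group_bij[OF zero_notin_roots assms(2)] by (metis bij_is_inj inv_f_f)
    ultimately show "b \<in> insert (inv w a) (inversions w)"
      using \<open>b \<in> Pos\<close> by (auto simp: inversions_def)
  qed
  then have "card (inversions (refl a \<circ> w)) \<le> card (insert (inv w a) (inversions w))"
    by (intro card_mono) (simp_all add: finite_inversions)
  also have "\<dots> \<le> card (inversions w) + 1"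
    by (simp add: card_insert_if finite_inversions)
  finally show ?thesis .
qed

text \<open>The simple reflection in a permutes the positive roots other than a, so composing on the
  right with it adds a as a new inversion and transports the old ones.\<close>
lemma card_inversions_comp_refl:
  assumes "a \<in> D" and "w \<in> weyl_group R" and "w a \<in> Pos"
  shows "card (inversions w) + 1 \<le> card (inversions (w \<circ> refl a))"
proof -
  have a: "a \<noteq> 0" "a \<in> Pos" using assms(1) simple_nonzero simple_pos by auto
  have "w (refl a a) = - w a"
    using a(1) weyl_group_linear[OF assms(2)] by (simp add: refl_self linear_neg)
  then have "a \<in> inversions (w \<circ> refl a)"
    using a(2) assms(3) by (auto simp: inversions_def)
  moreover have "refl a ` inversions w \<subseteq> inversions (w \<circ> refl a)"
    using refl_simple_pos[OF assms(1)] a(1) assms(3) pos_notin_neg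
    by (fastforce simp: inversions_def)
  moreover have "a \<notin> refl a ` inversions w"
  proof
    assume "a \<in> refl a ` inversions w"
    then obtain b where "b \<in> inversions w" "a = refl a b" by blast
    then have "b = - a" using a(1) by (metis refl_refl refl_self)
    then have "- a \<in> Pos" using \<open>b \<in> inversions w\<close> by (simp add: inversions_def)
    then show False using a(2) pos_notin_neg by force
  qed
  moreover have "inj_on (refl a) (inversions w)"
    using a(1) by (metis inj_onI refl_refl)
  ultimately have "card (insert a (refl a ` inversions w)) \<le> card (inversions (w \<circ> refl a))"
    by (intro card_mono) (simp_all add: finite_inversions)
  then show ?thesis
    using \<open>a \<notin> refl a ` inversions w\<close> \<open>inj_on (refl a) (inversions w)\<close>
    by (simp add: card_image finite_inversions)
qed

lemma card_inversions_le_length: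
  "set l \<subseteq> D \<Longrightarrow> card (inversions (refl_prod l)) \<le> length l"
proof (induction l)
  case (Cons a l)
  then have "card (inversions (refl a \<circ> refl_prod l)) \<le> card (inversions (refl_prod l)) + 1"
    using card_inversions_refl_comp simple_word_in_weyl_group by simp
  moreover have "card (inversions (refl_prod l)) \<le> length l"
    using Cons by simp
  ultimately show ?case unfolding refl_prod_Cons list.size by linarith
qed (simp add: inversions_id)

lemma simple_word_neg_prefix:
  "set l \<subseteq> D \<Longrightarrow> card (inversions (refl_prod l)) < length l \<Longrightarrow>
    \<exists>l1 a l2. l = l1 @ a # l2 \<and> refl_prod l1 a \<in> Neg"
proof (induction l rule: rev_induct)
  case (snoc a l)
  have l: "set l \<subseteq> D" and a: "a \<in> D" using snoc.prems(1) by auto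
  show ?case
  proof (cases "refl_prod l a \<in> Neg")
    case True
    then show ?thesis by (intro exI[of _ l] exI[of _ a] exI[of _ "[]"]) simp
  next
    case False
    then have "refl_prod l a \<in> Pos"
      using pos_or_neg weyl_group_maps_roots simple_word_in_weyl_group[OF l] a simple_in_roots
      by blast
    then have "card (inversions (refl_prod l)) + 1 \<le> card (inversions (refl_prod (l @ [a])))"
      using card_inversions_comp_refl[OF a simple_word_in_weyl_group[OF l]]
      by (simp add: refl_prod_append)
    then have "card (inversions (refl_prod l)) < length l"
      using snoc.prems(2) by simp
    then obtain l1 b l2 where "l = l1 @ b # l2" "refl_prod l1 b \<in> Neg"
      using snoc.IH l by blast
    then show ?thesis by (intro exI[of _ l1] exI[of _ b] exI[of _ "l2 @ [a]"]) simp
  qed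
qed simp

text \<open>Reading the word from the right, the letter b at which the image of a first becomes
  negative is that image itself, since the simple reflection in b maps no positive root other
  than b to a negative one.\<close>
lemma simple_word_neg_image_split:
  "set l \<subseteq> D \<Longrightarrow> a \<in> D \<Longrightarrow> refl_prod l a \<in> Neg \<Longrightarrow>
    \<exists>l1 b l2. l = l1 @ b # l2 \<and> refl_prod l2 a = b"
proof (induction l)
  case Nil
  then show ?case using simple_pos pos_notin_neg by auto
next
  case (Cons b l)
  have l: "set l \<subseteq> D" and b: "b \<in> D" using Cons.prems(1) by auto
  show ?case
  proof (cases "refl_prod l a \<in> Neg")
    case True
    then obtain l1 c l2 where "l = l1 @ c # l2" "refl_prod l2 a = c"
      using Cons.IH l Cons.prems(2) by blast
    then show ?thesis by (intro exI[of _ "b # l1"] exI[of _ c] exI[of _ l2]) simp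
  next
    case False
    then have "refl_prod l a \<in> Pos"
      using pos_or_neg weyl_group_maps_roots simple_word_in_weyl_group[OF l] Cons.prems(2)
        simple_in_roots by blast
    moreover have "refl b (refl_prod l a) \<in> Neg"
      using Cons.prems(3) by simp
    ultimately have "refl_prod l a = b"
      using refl_simple_pos[OF b] pos_notin_neg by blast
    then show ?thesis by (intro exI[of _ "[]"] exI[of _ b] exI[of _ l]) simp
  qed
qed

lemma simple_word_deletion:
  assumes l: "set l \<subseteq> D" and short: "card (inversions (refl_prod l)) < length l"
  shows "\<exists>l'. set l' \<subseteq> D \<and> refl_prod l' = refl_prod l \<and> length l' < length l"
proof -
  obtain l1 a l2 where split1: "l = l1 @ a # l2" "refl_prod l1 a \<in> Neg"
    using simple_word_neg_prefix[OF l short] by blast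
  then have l1: "set l1 \<subseteq> D" and a: "a \<in> D" using l by auto
  obtain m1 b m2 where split2: "l1 = m1 @ b # m2" "refl_prod m2 a = b"
    using simple_word_neg_image_split[OF l1 a split1(2)] by blast
  have "0 \<notin> set m2" using l1 split2(1) simple_nonzero by auto
  then have "refl b \<circ> refl_prod m2 = refl_prod m2 \<circ> refl a"
    using split2(2) refl_orthogonal_comp[OF linear_refl_prod refl_prod_inner] by blast
  then have cancel: "refl b \<circ> refl_prod m2 \<circ> refl a = refl_prod m2"
    using simple_nonzero[OF a] by (simp add: fun_eq_iff)
  have "refl_prod l = refl_prod m1 \<circ> (refl b \<circ> refl_prod m2 \<circ> refl a) \<circ> refl_prod l2"
    unfolding split1(1) split2(1)
    by (simp only: refl_prod_append refl_prod_Cons append_Cons comp_assoc)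
  also have "\<dots> = refl_prod (m1 @ m2 @ l2)"
    unfolding cancel by (simp add: refl_prod_append comp_assoc)
  finally show ?thesis
    using l split1(1) split2(1) by (intro exI[of _ "m1 @ m2 @ l2"]) auto
qed

lemma weyl_length_witness:
  assumes "w \<in> weyl_group R"
  obtains l where "set l \<subseteq> D" "refl_prod l = w" "length l = weyl_length D w"
proof -
  obtain l where "set l \<subseteq> D" "w = refl_prod l"
    using assms unfolding weyl_group_iff_simple_word by blast
  then have "\<exists>n l. length l = n \<and> set l \<subseteq> D \<and> refl_prod l = w"
    by blast
  from LeastI_ex[OF this] obtain l where "length l = weyl_length D w" "set l \<subseteq> D" "refl_prod l = w"
    unfolding weyl_length_def by blast
  then show ?thesis using that by simp
qed

lemma weyl_length_eq_card_inversions: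
  assumes "w \<in> weyl_group R"
  shows "weyl_length D w = card (inversions w)"
proof -
  obtain l where l: "set l \<subseteq> D" "refl_prod l = w" "length l = weyl_length D w"
    using weyl_length_witness[OF assms] .
  have "card (inversions w) \<le> length l"
    using card_inversions_le_length[OF l(1)] l(2) by simp
  moreover have "\<not> card (inversions w) < length l"
  proof
    assume "card (inversions w) < length l"
    then obtain l' where l': "set l' \<subseteq> D" "refl_prod l' = w" "length l' < length l"
      using simple_word_deletion[OF l(1)] l(2) by blast
    then show False using weyl_length_le[OF l'(1,2)] l(3) by simp
  qed
  ultimately show ?thesis using l(3) by simp
qed

section \<open>The longest element and rationality\<close>

lemma weyl_group_neg_comb:
  assumes "w \<in> weyl_group R" and "\<forall>d\<in>D. c d \<in> \<nat>" and "\<forall>d\<in>D. c d \<noteq> 0 \<longrightarrow> w d \<in> Neg"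
  shows "nonneg_int_comb D (- w (\<Sum>d\<in>D. c d *\<^sub>R d))"
proof -
  have "- w (\<Sum>d\<in>D. c d *\<^sub>R d) = (\<Sum>d\<in>D. c d *\<^sub>R - w d)"
    using weyl_group_linear[OF assms(1)] by (simp add: linear_sum linear_scale sum_negf)
  also have "nonneg_int_comb D \<dots>"
  proof (intro nonneg_int_comb_sum[OF finite_simple])
    fix d assume "d \<in> D"
    then show "nonneg_int_comb D (c d *\<^sub>R - w d)"
      using assms(2,3) nonneg_int_comb_scaleR[of "c d" D "- w d"] neg_iff nonneg_int_comb_0
      by (cases "c d = 0") auto
  qed
  finally show ?thesis .
qed

lemma weyl_group_neg_on_pos:
  assumes "w \<in> weyl_group R" and "\<forall>a\<in>D. w a \<in> Neg" and "b \<in> Pos"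
  shows "w b \<in> Neg"
proof -
  obtain c where "\<forall>d\<in>D. c d \<in> \<nat>" "b = (\<Sum>d\<in>D. c d *\<^sub>R d)"
    using assms(3) by (auto simp: pos_roots_def nonneg_int_comb_def)
  then have "nonneg_int_comb D (- w b)"
    using weyl_group_neg_comb[OF assms(1)] assms(2) by blast
  moreover have "w b \<in> R"
    using weyl_group_maps_roots[OF assms(1)] pos_in_roots[OF assms(3)] .
  ultimately show ?thesis by (simp add: neg_iff)
qed

lemma longest_element_neg_on_pos:
  assumes "longest_element R D w0" and "b \<in> Pos"
  shows "w0 b \<in> Neg"
proof -
  have w0: "w0 \<in> weyl_group R"
    and longest: "\<And>w. w \<in> weyl_group R \<Longrightarrow> weyl_length D w \<le> weyl_length D w0"
    using assms(1) by (auto simp: longest_element_def)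
  have "w0 a \<in> Neg" if a: "a \<in> D" for a
  proof (rule ccontr)
    assume "w0 a \<notin> Neg"
    then have "w0 a \<in> Pos"
      using pos_or_neg weyl_group_maps_roots[OF w0] a simple_in_roots by blast
    have w0a: "w0 \<circ> refl a \<in> weyl_group R"
      using w0 a simple_in_roots by (blast intro: weyl_group_comp refl_in_weyl_group)
    have "weyl_length D w0 + 1 = card (inversions w0) + 1"
      using weyl_length_eq_card_inversions[OF w0] by simp
    also have "\<dots> \<le> card (inversions (w0 \<circ> refl a))"
      using card_inversions_comp_refl[OF a w0 \<open>w0 a \<in> Pos\<close>] .
    also have "\<dots> = weyl_length D (w0 \<circ> refl a)"
      using weyl_length_eq_card_inversions[OF w0a] by simp
    also have "\<dots> \<le> weyl_length D w0"
      using longest[OF w0a] .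
    finally show False by simp
  qed
  then show ?thesis using weyl_group_neg_on_pos[OF w0] assms(2) by blast
qed

lemma weyl_group_pos_on_pos_eq_id:
  assumes "w \<in> weyl_group R" and "\<forall>b\<in>Pos. w b \<in> Pos"
  shows "w = id"
proof -
  obtain l where l: "refl_prod l = w" "length l = weyl_length D w"
    using weyl_length_witness[OF assms(1)] by blast
  have "inversions w = {}"
    using assms(2) pos_notin_neg by (auto simp: inversions_def)
  then have "length l = 0"
    using weyl_length_eq_card_inversions[OF assms(1)] l(2) by simp
  with l(1) show ?thesis by simp
qed

lemma longest_element_unique:
  assumes "longest_element R D w0" and "u \<in> weyl_group R" and "\<forall>b\<in>Pos. u b \<in> Neg"
  shows "u = w0"
proof -
  have w0: "w0 \<in> weyl_group R"
    using assms(1) by (simp add: longest_element_def)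
  have swap: "v \<circ> w0 = id" if "v \<in> weyl_group R" "\<forall>b\<in>Pos. v b \<in> Neg" for v
  proof (rule weyl_group_pos_on_pos_eq_id)
    show "v \<circ> w0 \<in> weyl_group R" using weyl_group_comp[OF that(1) w0] .
    show "\<forall>b\<in>Pos. (v \<circ> w0) b \<in> Pos"
    proof
      fix b assume "b \<in> Pos"
      then obtain p where "p \<in> Pos" "w0 b = - p"
        using longest_element_neg_on_pos[OF assms(1)] by blast
      then show "(v \<circ> w0) b \<in> Pos"
        using that weyl_group_linear[OF that(1)] by (force simp: linear_neg)
    qed
  qed
  have "u = u \<circ> (w0 \<circ> w0)"
    using swap w0 longest_element_neg_on_pos[OF assms(1)] by simp
  also have "\<dots> = w0"
    using swap assms(2,3) by (simp flip: comp_assoc)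
  finally show ?thesis .
qed

lemma exists_simple_pos_image:
  assumes "longest_element R D w0" and "u \<in> weyl_group R" and "u \<noteq> w0"
  shows "\<exists>b\<in>D. u b \<in> Pos"
proof (rule ccontr)
  assume "\<not> ?thesis"
  then have "\<forall>a\<in>D. u a \<in> Neg"
    using pos_or_neg weyl_group_maps_roots[OF assms(2)] simple_in_roots by blast
  then have "u = w0"
    using weyl_group_neg_on_pos[OF assms(2)] longest_element_unique[OF assms(1,2)] by blast
  with assms(3) show False ..
qed

lemma simple_below_pos_image:
  assumes u: "u \<in> weyl_group R" and no_swap: "\<forall>a\<in>D. u a \<in> Neg \<longrightarrow> inv u a \<notin> Pos"
    and b: "b \<in> D" "u b \<in> Pos"
  shows "\<exists>a\<in>D. u a \<in> Pos \<and> root_le D a (u b)"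
proof -
  obtain c where c: "\<forall>d\<in>D. c d \<in> \<nat>" "u b = (\<Sum>d\<in>D. c d *\<^sub>R d)"
    using b(2) by (auto simp: pos_roots_def nonneg_int_comb_def)
  have "\<exists>a\<in>D. c a \<noteq> 0 \<and> u a \<in> Pos"
  proof (rule ccontr)
    assume "\<not> ?thesis"
    then have "\<forall>d\<in>D. c d \<noteq> 0 \<longrightarrow> inv u d \<in> Neg"
      using no_swap pos_or_neg simple_in_roots weyl_group_maps_roots
        weyl_group_inv[OF zero_notin_roots u] u by blast
    then have "nonneg_int_comb D (- inv u (u b))"
      unfolding c(2) using weyl_group_neg_comb weyl_group_inv[OF zero_notin_roots u] c(1) by blast
    moreover have "inv u (u b) = b"
      using weyl_group_bij[OF zero_notin_roots u] by (simp add: bij_is_inj)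
    ultimately have "b \<in> Neg"
      using b(1) simple_in_roots by (auto simp: neg_iff)
    then show False
      using simple_pos[OF b(1)] pos_notin_neg by blast
  qed
  then obtain a where "a \<in> D" "c a \<noteq> 0" "u a \<in> Pos" by blast
  then show ?thesis
    using root_le_of_coeff[OF finite_simple _ c(1)] c(2) by metis
qed

lemma nu_nonempty:
  assumes "u \<in> weyl_group R" and "\<forall>a\<in>D. u a \<in> Neg \<longrightarrow> inv u a \<notin> Pos"
    and "b \<in> D" "u b \<in> Pos"
  shows "nu R D u k \<noteq> {}"
proof -
  have "\<exists>b\<in>D. u b \<in> Pos \<and> u b \<in> nu R D u k"
  proof (induction k)
    case 0
    then show ?case using assms(3,4) simple_pos by auto
  next
    case (Suc k)
    then obtain b where "b \<in> D" "u b \<in> Pos" "u b \<in> nu R D u k" by blast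
    moreover obtain a where "a \<in> D" "u a \<in> Pos" "root_le D a (u b)"
      using simple_below_pos_image[OF assms(1,2)] calculation by blast
    ultimately have "a \<in> Adj R D (nu R D u k)"
      by (auto simp: Adj_def simple_pos)
    then show ?case using \<open>a \<in> D\<close> \<open>u a \<in> Pos\<close> by auto
  qed
  then show ?thesis by blast
qed

end

theorem lemma4:
  fixes R D :: "'a::euclidean_space set" and u w0 :: "'a \<Rightarrow> 'a"
  assumes "root_system R" and "is_base R D"
    and "longest_element R D w0"
    and "u \<in> weyl_group R"
    and "rational R D u"
    and "u \<noteq> w0"
  shows "\<exists>a\<in>D. inv u a \<in> pos_roots R D \<and> u a \<in> uminus ` pos_roots R D"
proof (rule ccontr)
  interpret based_root_system R D
    using assms(1,2) by unfold_locales
  assume "\<not> ?thesis"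
  then have no_swap: "\<forall>a\<in>D. u a \<in> Neg \<longrightarrow> inv u a \<notin> Pos" by blast
  obtain b where "b \<in> D" "u b \<in> Pos"
    using exists_simple_pos_image[OF assms(3,4,6)] by blast
  then have "nu R D u k \<noteq> {}" for k
    using nu_nonempty[OF assms(4) no_swap] by blast
  then show False
    using assms(5) by (simp add: rational_def)
qed

end
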